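(* Let $m$ be even and let $G=B(m;R,S,T)$ be a bicirculant with $m/2\notin R\cup T$, and let $G^{=}=B(m;R\cup\{m/2\},S,T\cup\{m/2\})$. Suppose $G^{=}$ is connected. Then either $G$ is connected, or $G$ consists of exactly two connected components, both isomorphic to a connected graph $G_0$; in the latter case $G^{=}$ is isomorphic to the cartesian product $G_0\,\square\,K_2$.
   Context: For an integer $m\ge 1$ and subsets $R,S,T\subseteq\mathbb{Z}_m$ with $R=-R$, $T=-T$, $0\notin R\cup T$, $0\in S$ and $|R|=|T|$, the bicirculant $B(m;R,S,T)$ is the graph with vertex set $\{u_0,\dots,u_{m-1}\}\cup\{v_0,\dots,v_{m-1}\}$ and edge set $\{u_iu_{i+j}: i\in\mathbb{Z}_m, j\in R\}\cup\{v_iv_{i+j}: i\in\mathbb{Z}_m, j\in T\}\cup\{u_iv_{i+j}: i\in\mathbb{Z}_m, j\in S\}$ (indices mod $m$). *)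

theory Defs
  imports Main
begin

text \<open>A (simple, undirected) graph is given by a vertex set and an adjacency
  relation; only adjacencies between vertices of the vertex set are relevant.\<close>
type_synonym 'a sgraph = "'a set \<times> ('a \<Rightarrow> 'a \<Rightarrow> bool)"

definition gverts :: "'a sgraph \<Rightarrow> 'a set" where
  "gverts G = fst G"

definition gadj :: "'a sgraph \<Rightarrow> 'a \<Rightarrow> 'a \<Rightarrow> bool" where
  "gadj G x y \<longleftrightarrow> x \<in> fst G \<and> y \<in> fst G \<and> snd G x y"

definition reach :: "'a sgraph \<Rightarrow> 'a \<Rightarrow> 'a \<Rightarrow> bool" where
  "reach G x y \<longleftrightarrow> x \<in> gverts G \<and> (gadj G)\<^sup>*\<^sup>* x y"

definition gconnected :: "'a sgraph \<Rightarrow> bool" where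
  "gconnected G \<longleftrightarrow> gverts G \<noteq> {} \<and> (\<forall>x\<in>gverts G. \<forall>y\<in>gverts G. reach G x y)"

definition components :: "'a sgraph \<Rightarrow> 'a set set" where
  "components G = {C. \<exists>x\<in>gverts G. C = {y. reach G x y}}"

definition induced :: "'a sgraph \<Rightarrow> 'a set \<Rightarrow> 'a sgraph" where
  "induced G C = (C, \<lambda>x y. gadj G x y \<and> x \<in> C \<and> y \<in> C)"

definition graph_iso :: "'a sgraph \<Rightarrow> 'b sgraph \<Rightarrow> bool" where
  "graph_iso G H \<longleftrightarrow> (\<exists>f. bij_betw f (gverts G) (gverts H) \<and>
      (\<forall>x\<in>gverts G. \<forall>y\<in>gverts G. gadj G x y \<longleftrightarrow> gadj H (f x) (f y)))"

definition prod_K2 :: "'a sgraph \<Rightarrow> ('a \<times> bool) sgraph" where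
  "prod_K2 G = (gverts G \<times> UNIV,
     \<lambda>(x,a) (y,b). (a = b \<and> gadj G x y) \<or> (x = y \<and> a \<noteq> b))"

text \<open>Bicirculant B(m;R,S,T). Z_m is represented by {0..<m} (integers);
  vertex u_i is (False,i), v_i is (True,i).\<close>
definition bicirc_params :: "int \<Rightarrow> int set \<Rightarrow> int set \<Rightarrow> int set \<Rightarrow> bool" where
  "bicirc_params m R S T \<longleftrightarrow> m \<ge> 1 \<and>
     R \<subseteq> {0..<m} \<and> S \<subseteq> {0..<m} \<and> T \<subseteq> {0..<m} \<and>
     (\<forall>j\<in>R. (- j) mod m \<in> R) \<and> (\<forall>j\<in>T. (- j) mod m \<in> T) \<and>
     0 \<notin> R \<and> 0 \<notin> T \<and> 0 \<in> S \<and> card R = card T"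

definition bicirc :: "int \<Rightarrow> int set \<Rightarrow> int set \<Rightarrow> int set \<Rightarrow> (bool \<times> int) sgraph" where
  "bicirc m R S T = ({(b,i). 0 \<le> i \<and> i < m},
     \<lambda>(b,i) (c,k).
        (\<not> b \<and> \<not> c \<and> (k - i) mod m \<in> R) \<or>
        (b \<and> c \<and> (k - i) mod m \<in> T) \<or>
        (\<not> b \<and> c \<and> (k - i) mod m \<in> S) \<or>
        (b \<and> \<not> c \<and> (i - k) mod m \<in> S))"

end

theory Submission
  imports Defs
begin

(* Adding m/2 to R and T adds to G exactly the perfect matching x -- \<rho> x, where \<rho> is the
   rotation by m/2, an involutive automorphism of G. Along a walk of G= every vertex therefore
   stays in the component of the start vertex x or of \<rho> x. If some x is not joined to \<rho> x
   in G, these are the only two components, \<rho> swaps them (so they are isomorphic), and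
   (x, a) \<mapsto> (if a then \<rho> x else x) maps the product of the component of x with K2 onto G=. *)

lemma gadj_gverts: "gadj G x y \<Longrightarrow> x \<in> gverts G \<and> y \<in> gverts G"
  by (simp add: gadj_def gverts_def)

lemma gverts_induced [simp]: "gverts (induced G C) = C"
  by (simp add: induced_def gverts_def)

lemma gadj_induced: "gadj (induced G C) x y \<longleftrightarrow> gadj G x y \<and> x \<in> C \<and> y \<in> C"
  by (auto simp: induced_def gadj_def)

lemma reach_gverts: "reach G x y \<Longrightarrow> x \<in> gverts G \<and> y \<in> gverts G"
proof -
  have "(gadj G)\<^sup>*\<^sup>* x y \<Longrightarrow> x \<in> gverts G \<Longrightarrow> y \<in> gverts G"
    by (induction rule: rtranclp_induct) (auto dest: gadj_gverts)
  then show "reach G x y \<Longrightarrow> ?thesis" by (simp add: reach_def)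
qed

lemma reach_refl: "x \<in> gverts G \<Longrightarrow> reach G x x"
  by (simp add: reach_def)

lemma reach_trans: "reach G x y \<Longrightarrow> reach G y z \<Longrightarrow> reach G x z"
  unfolding reach_def by auto

lemma reach_step: "reach G x y \<Longrightarrow> gadj G y z \<Longrightarrow> reach G x z"
  unfolding reach_def by auto

lemma reach_sym:
  assumes "\<And>x y. gadj G x y \<Longrightarrow> gadj G y x" and "reach G x y"
  shows "reach G y x"
proof -
  have "symp (gadj G)" using assms(1) by (blast intro: sympI)
  then show ?thesis
    using assms(2) reach_gverts[OF assms(2)] symp_rtranclp unfolding reach_def
    by (metis sympD)
qed

lemma reach_induced:
  assumes closed: "\<And>x y. x \<in> C \<Longrightarrow> gadj G x y \<Longrightarrow> y \<in> C"
    and "reach G x y" "x \<in> C"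
  shows "reach (induced G C) x y"
proof -
  have "(gadj G)\<^sup>*\<^sup>* x y \<Longrightarrow> x \<in> C \<Longrightarrow> y \<in> C \<and> (gadj (induced G C))\<^sup>*\<^sup>* x y"
  proof (induction rule: rtranclp_induct)
    case (step y z)
    then have y: "y \<in> C" "(gadj (induced G C))\<^sup>*\<^sup>* x y" by simp_all
    have "z \<in> C" using closed y(1) step.hyps(2) by blast
    with y step.hyps(2) show ?case by (meson gadj_induced rtranclp.rtrancl_into_rtrancl)
  qed simp
  then show ?thesis using assms(2,3) by (simp add: reach_def)
qed

definition component_of :: "'a sgraph \<Rightarrow> 'a \<Rightarrow> 'a set" where
  "component_of G x = {y. reach G x y}"

lemma components_eq_image: "components G = component_of G ` gverts G"
  by (auto simp: components_def component_of_def)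

lemma component_of_eq:
  assumes "\<And>x y. gadj G x y \<Longrightarrow> gadj G y x" and "reach G x y"
  shows "component_of G y = component_of G x"
proof -
  have yx: "reach G y x" by (rule reach_sym[OF assms])
  have "reach G y z \<longleftrightarrow> reach G x z" for z
    using reach_trans[OF yx, of z] reach_trans[OF assms(2), of z] by blast
  then show ?thesis by (simp add: component_of_def)
qed

lemma component_of_closed: "x \<in> component_of G y \<Longrightarrow> gadj G x z \<Longrightarrow> z \<in> component_of G y"
  using reach_step[of G y x z] by (simp add: component_of_def)

lemma gconnected_induced_component_of:
  assumes sym: "\<And>x y. gadj G x y \<Longrightarrow> gadj G y x" and "x \<in> gverts G"
  shows "gconnected (induced G (component_of G x))"
  unfolding gconnected_def
proof (intro conjI ballI)
  show "gverts (induced G (component_of G x)) \<noteq> {}"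
    using reach_refl[OF assms(2)] by (auto simp: component_of_def)
  fix y z assume "y \<in> gverts (induced G (component_of G x))" "z \<in> gverts (induced G (component_of G x))"
  then have "y \<in> component_of G x" "z \<in> component_of G x" by simp_all
  then have "reach G y x" "reach G x z"
    using reach_sym[OF sym] unfolding component_of_def by auto
  then have "reach G y z" by (rule reach_trans)
  moreover have "\<And>u v. u \<in> component_of G x \<Longrightarrow> gadj G u v \<Longrightarrow> v \<in> component_of G x"
    by (rule component_of_closed)
  ultimately show "reach (induced G (component_of G x)) y z"
    using \<open>y \<in> component_of G x\<close> by (intro reach_induced)
qed

lemma graph_iso_refl: "graph_iso G G"
  unfolding graph_iso_def by (rule exI[of _ id]) simp

lemma graph_iso_sym:
  assumes "graph_iso G H"
  shows "graph_iso H G"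
proof -
  obtain f where f: "bij_betw f (gverts G) (gverts H)"
    and adj: "\<forall>x\<in>gverts G. \<forall>y\<in>gverts G. gadj G x y \<longleftrightarrow> gadj H (f x) (f y)"
    using assms unfolding graph_iso_def by blast
  let ?g = "inv_into (gverts G) f"
  have "bij_betw ?g (gverts H) (gverts G)" using f by (rule bij_betw_inv_into)
  moreover have "gadj H x y \<longleftrightarrow> gadj G (?g x) (?g y)" if "x \<in> gverts H" "y \<in> gverts H" for x y
    using adj f that by (simp add: bij_betw_def bij_betw_inv_into_right inv_into_into)
  ultimately show ?thesis unfolding graph_iso_def by blast
qed

lemma graph_iso_induced:
  assumes "bij_betw f D C"
    and "\<And>x y. x \<in> D \<Longrightarrow> y \<in> D \<Longrightarrow> gadj G (f x) (f y) \<longleftrightarrow> gadj G x y"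
  shows "graph_iso (induced G D) (induced G C)"
  unfolding graph_iso_def
proof (intro exI conjI ballI)
  show "bij_betw f (gverts (induced G D)) (gverts (induced G C))"
    using assms(1) by simp
  fix x y assume "x \<in> gverts (induced G D)" "y \<in> gverts (induced G D)"
  then have "x \<in> D" "y \<in> D" by simp_all
  then show "gadj (induced G D) x y \<longleftrightarrow> gadj (induced G C) (f x) (f y)"
    using assms(2) bij_betwE[OF assms(1)] by (auto simp: gadj_induced)
qed

lemma gverts_prod_K2 [simp]: "gverts (prod_K2 H) = gverts H \<times> UNIV"
  by (simp add: prod_K2_def gverts_def)

lemma gadj_prod_K2:
  "gadj (prod_K2 H) (x, a) (y, b) \<longleftrightarrow>
     x \<in> gverts H \<and> y \<in> gverts H \<and> ((a = b \<and> gadj H x y) \<or> (x = y \<and> a \<noteq> b))"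
  by (auto simp: prod_K2_def gadj_def gverts_def)

subsection \<open>Adding the matching of an involutive automorphism\<close>

locale involution_matching =
  fixes G G' :: "'a sgraph" and \<phi> :: "'a \<Rightarrow> 'a"
  assumes gadj_sym: "gadj G x y \<Longrightarrow> gadj G y x"
    and phi_gverts: "x \<in> gverts G \<Longrightarrow> \<phi> x \<in> gverts G"
    and phi_phi: "x \<in> gverts G \<Longrightarrow> \<phi> (\<phi> x) = x"
    and gadj_phi: "x \<in> gverts G \<Longrightarrow> y \<in> gverts G \<Longrightarrow> gadj G (\<phi> x) (\<phi> y) \<longleftrightarrow> gadj G x y"
    and gverts_G': "gverts G' = gverts G"
    and gadj_G': "gadj G' x y \<longleftrightarrow> gadj G x y \<or> x \<in> gverts G \<and> y = \<phi> x"
begin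

lemma reach_phi:
  assumes "reach G x y"
  shows "reach G (\<phi> x) (\<phi> y)"
proof -
  have x: "x \<in> gverts G" using reach_gverts[OF assms] by simp
  have "(gadj G)\<^sup>*\<^sup>* x y" using assms by (simp add: reach_def)
  then have "(gadj G)\<^sup>*\<^sup>* (\<phi> x) (\<phi> y)"
  proof (induction rule: rtranclp_induct)
    case (step y z)
    have "gadj G (\<phi> y) (\<phi> z)"
      using gadj_phi gadj_gverts[OF step.hyps(2)] step.hyps(2) by simp
    with step.IH show ?case by (rule rtranclp.rtrancl_into_rtrancl)
  qed simp
  then show ?thesis using phi_gverts[OF x] by (simp add: reach_def)
qed

lemma component_of_phi:
  assumes x: "x \<in> gverts G"
  shows "\<phi> ` component_of G x = component_of G (\<phi> x)"
proof
  show "\<phi> ` component_of G x \<subseteq> component_of G (\<phi> x)"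
    unfolding component_of_def using reach_phi by blast
  show "component_of G (\<phi> x) \<subseteq> \<phi> ` component_of G x"
  proof
    fix y assume "y \<in> component_of G (\<phi> x)"
    then have y: "reach G (\<phi> x) y" by (simp add: component_of_def)
    have "reach G x (\<phi> y)" using reach_phi[OF y] phi_phi[OF x] by simp
    moreover have "y = \<phi> (\<phi> y)" using phi_phi reach_gverts[OF y] by simp
    ultimately show "y \<in> \<phi> ` component_of G x"
      unfolding component_of_def by blast
  qed
qed

text \<open>A matching edge swaps the component of \<open>x\<close> with that of \<open>\<phi> x\<close>, as \<open>\<phi>\<close> is an
  involutive automorphism.\<close>
lemma reach_G'_cases:
  assumes "reach G' x y"
  shows "reach G x y \<or> reach G (\<phi> x) y"
proof -
  have x: "x \<in> gverts G" using assms gverts_G' by (simp add: reach_def)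
  have "(gadj G')\<^sup>*\<^sup>* x y" using assms by (simp add: reach_def)
  then show ?thesis
  proof (induction rule: rtranclp_induct)
    case base
    then show ?case using x by (simp add: reach_refl)
  next
    case (step y z)
    from step.hyps(2) consider "gadj G y z" | "z = \<phi> y" by (auto simp: gadj_G')
    then show ?case
    proof cases
      case 1
      then show ?thesis using step.IH reach_step[of G _ y z] by blast
    next
      case 2
      have "reach G (\<phi> x) (\<phi> y) \<or> reach G x (\<phi> y)"
        using step.IH reach_phi[of x y] reach_phi[of "\<phi> x" y] phi_phi[OF x] by auto
      then show ?thesis using 2 by blast
    qed
  qed
qed

lemma gconnected_if_reach_phi:
  assumes "gconnected G'" and "\<forall>x\<in>gverts G. reach G x (\<phi> x)"
  shows "gconnected G"
  unfolding gconnected_def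
proof (intro conjI ballI)
  show "gverts G \<noteq> {}" using assms(1) gverts_G' by (simp add: gconnected_def)
  fix x y assume x: "x \<in> gverts G" and "y \<in> gverts G"
  then have "reach G x y \<or> reach G (\<phi> x) y"
    using assms(1) gverts_G' by (intro reach_G'_cases) (simp add: gconnected_def)
  then show "reach G x y" using assms(2) x reach_trans[of G x "\<phi> x" y] by blast
qed

context
  fixes x0 :: 'a
  assumes x0_gverts: "x0 \<in> gverts G"
    and x0_not_reach: "\<not> reach G x0 (\<phi> x0)"
    and connected_G': "gconnected G'"
begin

abbreviation "C \<equiv> component_of G x0"
abbreviation "D \<equiv> component_of G (\<phi> x0)"

lemma x0_in_C: "x0 \<in> C"
  using x0_gverts by (simp add: component_of_def reach_refl)

lemma phi_C_eq_D: "\<phi> ` C = D"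
  using component_of_phi[OF x0_gverts] .

lemma phi_D_eq_C: "\<phi> ` D = C"
  using component_of_phi[OF phi_gverts[OF x0_gverts]] phi_phi[OF x0_gverts] by simp

lemma C_subset: "C \<subseteq> gverts G"
  unfolding component_of_def using reach_gverts[of G] by blast

lemma D_subset: "D \<subseteq> gverts G"
  unfolding component_of_def using reach_gverts[of G] by blast

lemma C_D_disjoint: "C \<inter> D = {}"
proof -
  have False if "y \<in> C" "y \<in> D" for y
  proof -
    have "reach G x0 y" "reach G y (\<phi> x0)"
      using that reach_sym[OF gadj_sym] by (auto simp: component_of_def)
    then show False using x0_not_reach reach_trans[of G x0 y "\<phi> x0"] by blast
  qed
  then show ?thesis by blast
qed

lemma gverts_eq_C_D: "gverts G = C \<union> D"
proof
  show "gverts G \<subseteq> C \<union> D"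
  proof
    fix y assume "y \<in> gverts G"
    then have "reach G' x0 y"
      using connected_G' x0_gverts gverts_G' by (simp add: gconnected_def)
    then show "y \<in> C \<union> D" using reach_G'_cases by (simp add: component_of_def)
  qed
qed (use C_subset D_subset in auto)

lemma components_eq_C_D: "components G = {C, D}"
proof -
  have "component_of G y \<in> {C, D}" if "y \<in> gverts G" for y
  proof -
    have "reach G x0 y \<or> reach G (\<phi> x0) y"
      using that gverts_eq_C_D by (simp add: component_of_def)
    then show ?thesis using component_of_eq[OF gadj_sym] by blast
  qed
  then show ?thesis
    using x0_gverts phi_gverts[OF x0_gverts] unfolding components_eq_image by blast
qed

lemma card_components: "card (components G) = 2"
  using components_eq_C_D C_D_disjoint x0_in_C by (auto simp: card_insert_if)

lemma no_gadj_C_D: "x \<in> C \<Longrightarrow> y \<in> D \<Longrightarrow> \<not> gadj G x y"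
  using component_of_closed[of x G x0 y] C_D_disjoint by blast

lemma graph_iso_induced_D_C: "graph_iso (induced G D) (induced G C)"
proof (rule graph_iso_induced)
  have "inj_on \<phi> D" using phi_phi D_subset by (metis inj_on_inverseI subsetD)
  then show "bij_betw \<phi> D C" using phi_D_eq_C by (simp add: bij_betw_def)
qed (use gadj_phi D_subset in auto)

lemma graph_iso_prod_K2_G': "graph_iso (prod_K2 (induced G C)) G'"
proof -
  define g where "g = (\<lambda>(x, a :: bool). if a then \<phi> x else x)"
  have phi_C: "x \<in> C \<Longrightarrow> \<phi> x \<in> D" for x using phi_C_eq_D by blast
  have phi_inj: "x \<in> C \<Longrightarrow> y \<in> C \<Longrightarrow> \<phi> x = \<phi> y \<Longrightarrow> x = y" for x y
    using phi_phi C_subset by (metis subsetD)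
  have "inj_on g (C \<times> UNIV)"
    using phi_C phi_inj C_D_disjoint by (auto simp: inj_on_def g_def)
  moreover have "g ` (C \<times> UNIV) = gverts G'"
  proof -
    have "C \<times> UNIV = C \<times> {False} \<union> C \<times> {True}" by auto
    moreover have "g ` (C \<times> {False}) = C" "g ` (C \<times> {True}) = \<phi> ` C"
      by (force simp: g_def)+
    ultimately have "g ` (C \<times> UNIV) = C \<union> \<phi> ` C" by (simp add: image_Un)
    then show ?thesis using gverts_G' gverts_eq_C_D phi_C_eq_D by simp
  qed
  ultimately have bij: "bij_betw g (gverts (prod_K2 (induced G C))) (gverts G')"
    by (simp add: bij_betw_def)
  have "gadj (prod_K2 (induced G C)) (x, a) (y, b) \<longleftrightarrow> gadj G' (g (x, a)) (g (y, b))"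
    if "x \<in> C" "y \<in> C" for x y a b
  proof -
    have "\<phi> x \<noteq> y" "\<phi> y \<noteq> x" "\<not> gadj G x (\<phi> y)" "\<not> gadj G (\<phi> x) y"
      using that phi_C C_D_disjoint no_gadj_C_D gadj_sym by blast+
    moreover have "gadj G (\<phi> x) (\<phi> y) \<longleftrightarrow> gadj G x y"
      using that C_subset gadj_phi by blast
    moreover have "\<phi> x = \<phi> y \<longleftrightarrow> x = y" using that phi_inj by blast
    ultimately show ?thesis
      using that C_subset phi_phi phi_gverts
      by (cases a; cases b) (auto simp: g_def gadj_G' gadj_prod_K2 gadj_induced)
  qed
  with bij show ?thesis unfolding graph_iso_def by (auto simp: g_def)
qed

end

theorem connected_or_two_isomorphic_components:
  assumes "gconnected G'"
  shows "gconnected G \<or> (\<exists>G0 :: 'a sgraph. gconnected G0 \<and> card (components G) = 2 \<and>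
     (\<forall>C\<in>components G. graph_iso (induced G C) G0) \<and> graph_iso G' (prod_K2 G0))"
proof (cases "\<forall>x\<in>gverts G. reach G x (\<phi> x)")
  case True
  then show ?thesis using gconnected_if_reach_phi assms by blast
next
  case False
  then obtain x0 where x0: "x0 \<in> gverts G" "\<not> reach G x0 (\<phi> x0)" by blast
  let ?G0 = "induced G (component_of G x0)"
  have "\<forall>C\<in>components G. graph_iso (induced G C) ?G0"
    using components_eq_C_D[OF x0 assms] graph_iso_induced_D_C[OF x0 assms] graph_iso_refl
    by simp
  moreover have "graph_iso G' (prod_K2 ?G0)"
    by (rule graph_iso_sym[OF graph_iso_prod_K2_G'[OF x0 assms]])
  ultimately show ?thesis
    using gconnected_induced_component_of[OF gadj_sym x0(1)] card_components[OF x0 assms] by blast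
qed

end

subsection \<open>Bicirculants\<close>

lemma gverts_bicirc: "gverts (bicirc m R S T) = {(b, i). 0 \<le> i \<and> i < m}"
  by (simp add: bicirc_def gverts_def)

lemma gadj_bicirc:
  "gadj (bicirc m R S T) (b, i) (c, k) \<longleftrightarrow> 0 \<le> i \<and> i < m \<and> 0 \<le> k \<and> k < m \<and>
     ((\<not> b \<and> \<not> c \<and> (k - i) mod m \<in> R) \<or>
      (b \<and> c \<and> (k - i) mod m \<in> T) \<or>
      (\<not> b \<and> c \<and> (k - i) mod m \<in> S) \<or>
      (b \<and> \<not> c \<and> (i - k) mod m \<in> S))"
  by (simp add: bicirc_def gadj_def)

lemma gadj_bicirc_sym:
  assumes R: "\<forall>j\<in>R. (- j) mod m \<in> R" and T: "\<forall>j\<in>T. (- j) mod m \<in> T"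
    and "gadj (bicirc m R S T) x y"
  shows "gadj (bicirc m R S T) y x"
proof -
  obtain b i c k where xy: "x = (b, i)" "y = (c, k)" by (cases x, cases y)
  have neg: "(i - k) mod m = (- ((k - i) mod m)) mod m" by (simp add: mod_minus_eq)
  show ?thesis using assms(3) R T unfolding xy gadj_bicirc neg by auto
qed

definition rotate_bicirc :: "int \<Rightarrow> int \<Rightarrow> bool \<times> int \<Rightarrow> bool \<times> int" where
  "rotate_bicirc m h = (\<lambda>(b, i). (b, (i + h) mod m))"

lemma rotate_bicirc_gverts:
  "m \<ge> 1 \<Longrightarrow> rotate_bicirc m h x \<in> gverts (bicirc m R S T)"
  by (cases x) (simp add: rotate_bicirc_def gverts_bicirc)

lemma rotate_bicirc_half_half:
  assumes "even m" "x \<in> gverts (bicirc m R S T)"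
  shows "rotate_bicirc m (m div 2) (rotate_bicirc m (m div 2) x) = x"
proof -
  obtain b i where x: "x = (b, i)" "0 \<le> i" "i < m" using assms(2) by (auto simp: gverts_bicirc)
  have "((i + m div 2) mod m + m div 2) mod m = (i + m) mod m"
    using assms(1) by (simp add: mod_add_left_eq add.assoc)
  also have "\<dots> = i" using x by simp
  finally show ?thesis using x by (simp add: rotate_bicirc_def)
qed

lemma gadj_bicirc_rotate:
  assumes "x \<in> gverts (bicirc m R S T)" "y \<in> gverts (bicirc m R S T)"
  shows "gadj (bicirc m R S T) (rotate_bicirc m h x) (rotate_bicirc m h y) \<longleftrightarrow>
    gadj (bicirc m R S T) x y"
proof -
  obtain b i c k where xy: "x = (b, i)" "y = (c, k)" by (cases x, cases y)
  have "((k + h) mod m - (i + h) mod m) mod m = (k - i) mod m"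
    "((i + h) mod m - (k + h) mod m) mod m = (i - k) mod m"
    by (simp_all add: mod_diff_eq)
  then show ?thesis using assms unfolding xy by (simp add: rotate_bicirc_def gadj_bicirc gverts_bicirc)
qed

lemma mod_diff_eq_iff:
  fixes i k d m :: int
  assumes "0 \<le> k" "k < m" "0 \<le> d" "d < m"
  shows "(k - i) mod m = d \<longleftrightarrow> k = (i + d) mod m"
proof
  assume h: "(k - i) mod m = d"
  have "(i + d) mod m = (i + (k - i)) mod m" unfolding h[symmetric] by (rule mod_add_right_eq)
  then show "k = (i + d) mod m" using assms by simp
next
  assume "k = (i + d) mod m"
  then have "(k - i) mod m = (i + d - i) mod m" by (simp add: mod_diff_left_eq)
  then show "(k - i) mod m = d" using assms by simp
qed

lemma gadj_bicirc_add_half: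
  assumes "m \<ge> 1"
  shows "gadj (bicirc m (R \<union> {m div 2}) S (T \<union> {m div 2})) x y \<longleftrightarrow>
    gadj (bicirc m R S T) x y \<or>
    x \<in> gverts (bicirc m R S T) \<and> y = rotate_bicirc m (m div 2) x"
proof -
  obtain b i c k where xy: "x = (b, i)" "y = (c, k)" by (cases x, cases y)
  have "(k - i) mod m = m div 2 \<longleftrightarrow> k = (i + m div 2) mod m" if "0 \<le> k" "k < m"
    using mod_diff_eq_iff that assms by simp
  moreover have "0 \<le> (i + m div 2) mod m" "(i + m div 2) mod m < m" using assms by simp_all
  ultimately show ?thesis
    unfolding xy by (auto simp: gadj_bicirc gverts_bicirc rotate_bicirc_def)
qed

theorem lemma2p8:
  fixes m :: int and R S T :: "int set"
  assumes "bicirc_params m R S T"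
    and "even m"
    and "m div 2 \<notin> R \<union> T"
    and "gconnected (bicirc m (R \<union> {m div 2}) S (T \<union> {m div 2}))"
  shows "gconnected (bicirc m R S T) \<or>
    (\<exists>G0 :: (bool \<times> int) sgraph. gconnected G0 \<and>
       card (components (bicirc m R S T)) = 2 \<and>
       (\<forall>C\<in>components (bicirc m R S T). graph_iso (induced (bicirc m R S T) C) G0) \<and>
       graph_iso (bicirc m (R \<union> {m div 2}) S (T \<union> {m div 2})) (prod_K2 G0))"
proof -
  have m: "m \<ge> 1" and R: "\<forall>j\<in>R. (- j) mod m \<in> R" and T: "\<forall>j\<in>T. (- j) mod m \<in> T"
    using assms(1) by (simp_all add: bicirc_params_def)
  interpret involution_matching "bicirc m R S T" "bicirc m (R \<union> {m div 2}) S (T \<union> {m div 2})"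
    "rotate_bicirc m (m div 2)"
  proof
    show "gadj (bicirc m R S T) y x" if "gadj (bicirc m R S T) x y" for x y
      using R T that by (rule gadj_bicirc_sym)
    show "rotate_bicirc m (m div 2) x \<in> gverts (bicirc m R S T)" for x
      using m by (rule rotate_bicirc_gverts)
    show "gverts (bicirc m (R \<union> {m div 2}) S (T \<union> {m div 2})) = gverts (bicirc m R S T)"
      by (simp add: gverts_bicirc)
    show "gadj (bicirc m (R \<union> {m div 2}) S (T \<union> {m div 2})) x y \<longleftrightarrow>
      gadj (bicirc m R S T) x y \<or> x \<in> gverts (bicirc m R S T) \<and> y = rotate_bicirc m (m div 2) x"
      for x y using m by (rule gadj_bicirc_add_half)
  qed (simp_all add: assms(2) rotate_bicirc_half_half gadj_bicirc_rotate)
  show ?thesis using connected_or_two_isomorphic_components[OF assms(4)] .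
qed

end
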